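(* Let $w_1,w_2,w_3\in\Sigma^*$ and let $u,v\in\Sigma^+$ be co-primitive. Then for every injective function $f:\mathbb{N}\to\mathbb{N}$, the language $\{w_1\cdot u^p\cdot w_2\cdot v^{f(p)}\cdot w_3 : p\in\mathbb{N}\}$ is not in $\mathcal{L}(\mathsf{FC})$.
   Context: $\Sigma$ is a fixed finite alphabet. A word $w\in\Sigma^+$ is primitive if there is no $z\in\Sigma^*$ and $k>1$ with $w=z^k$. Two words $w,v\in\Sigma^+$ are conjugate if there exist $x,y\in\Sigma^*$ with $w=xy$ and $v=yx$; they are co-primitive if both are primitive and they are not conjugate. For $w \in \Sigma^*$, $\mathsf{Facs}(w)$ is the set of all factors of $w$. The structure $\mathfrak{A}_w$ representing $w$ has universe $\mathsf{Facs}(w)\cup\{\perp\}$, a ternary relation $R_\circ=\{(x,y,z)\in\mathsf{Facs}(w)^3 : x=y\cdot z\}$, for each letter a constant interpreted as that letter if it occurs in $w$ and as $\perp$ otherwise, and a constant $\varepsilon$ interpreted as the empty word. $\mathsf{FC}$ is first-order logic over such structures, with atomic formulas $(x \mathbin{\dot=} y\cdot z)$ (meaning $R_\circ(x,y,z)$) where $x,y,z$ are variables, letters of $\Sigma$, or $\varepsilon$, closed under $\land,\lor,\neg,\exists,\forall$; quantified variables range over $\mathsf{Facs}(w)$. For a sentence $\varphi$, $\mathcal{L}(\varphi)=\{w\in\Sigma^*:\mathfrak{A}_w\models\varphi\}$, and $\mathcal{L}(\mathsf{FC})$ is the class of all such languages. *)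

theory Defs
  imports Main
begin

definition word_pow :: "'a list \<Rightarrow> nat \<Rightarrow> 'a list" where
  "word_pow z k = concat (replicate k z)"

definition primitive :: "'a list \<Rightarrow> bool" where
  "primitive w \<longleftrightarrow> w \<noteq> [] \<and> \<not> (\<exists>z k. k > 1 \<and> w = word_pow z k)"

definition conjugate :: "'a list \<Rightarrow> 'a list \<Rightarrow> bool" where
  "conjugate w v \<longleftrightarrow> (\<exists>x y. w = x @ y \<and> v = y @ x)"

definition co_primitive :: "'a list \<Rightarrow> 'a list \<Rightarrow> bool" where
  "co_primitive w v \<longleftrightarrow> primitive w \<and> primitive v \<and> \<not> conjugate w v"

definition Facs :: "'a list \<Rightarrow> 'a list set" where
  "Facs w = {x. \<exists>p s. w = p @ x @ s}"

datatype 'a fc_term = FVar nat | FLet 'a | FEps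

datatype 'a fc =
    FAtom "'a fc_term" "'a fc_term" "'a fc_term"   (* x = y . z *)
  | FAnd "'a fc" "'a fc"
  | FOr "'a fc" "'a fc"
  | FNot "'a fc"
  | FEx nat "'a fc"
  | FAll nat "'a fc"

fun fv_term :: "'a fc_term \<Rightarrow> nat set" where
  "fv_term (FVar x) = {x}"
| "fv_term (FLet a) = {}"
| "fv_term FEps = {}"

fun fv :: "'a fc \<Rightarrow> nat set" where
  "fv (FAtom x y z) = fv_term x \<union> fv_term y \<union> fv_term z"
| "fv (FAnd p q) = fv p \<union> fv q"
| "fv (FOr p q) = fv p \<union> fv q"
| "fv (FNot p) = fv p"
| "fv (FEx x p) = fv p - {x}"
| "fv (FAll x p) = fv p - {x}"

text \<open>Interpretation of a term in the structure for w; None stands for the bottom element.\<close>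
fun eval_term :: "'a list \<Rightarrow> (nat \<Rightarrow> 'a list) \<Rightarrow> 'a fc_term \<Rightarrow> 'a list option" where
  "eval_term w \<nu> (FVar x) = Some (\<nu> x)"
| "eval_term w \<nu> (FLet a) = (if a \<in> set w then Some [a] else None)"
| "eval_term w \<nu> FEps = Some []"

fun sat :: "'a list \<Rightarrow> (nat \<Rightarrow> 'a list) \<Rightarrow> 'a fc \<Rightarrow> bool" where
  "sat w \<nu> (FAtom x y z) =
     (case (eval_term w \<nu> x, eval_term w \<nu> y, eval_term w \<nu> z) of
        (Some a, Some b, Some c) \<Rightarrow> a \<in> Facs w \<and> b \<in> Facs w \<and> c \<in> Facs w \<and> a = b @ c
      | _ \<Rightarrow> False)"
| "sat w \<nu> (FAnd p q) = (sat w \<nu> p \<and> sat w \<nu> q)"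
| "sat w \<nu> (FOr p q) = (sat w \<nu> p \<or> sat w \<nu> q)"
| "sat w \<nu> (FNot p) = (\<not> sat w \<nu> p)"
| "sat w \<nu> (FEx x p) = (\<exists>u \<in> Facs w. sat w (\<nu>(x := u)) p)"
| "sat w \<nu> (FAll x p) = (\<forall>u \<in> Facs w. sat w (\<nu>(x := u)) p)"

definition sentence :: "'a fc \<Rightarrow> bool" where
  "sentence \<phi> \<longleftrightarrow> fv \<phi> = {}"

text \<open>For sentences the valuation is irrelevant; we fix the one mapping everything to epsilon.\<close>
definition fc_lang :: "'a fc \<Rightarrow> 'a list set" where
  "fc_lang \<phi> = {w. sat w (\<lambda>_. []) \<phi>}"

definition FC_languages :: "('a::finite) list set set" where
  "FC_languages = {L. \<exists>\<phi>. sentence \<phi> \<and> L = fc_lang \<phi>}"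

end

theory Submission
  imports Defs "HOL-Library.Sublist"
begin

text \<open>Write the words of the language as \<open>P a @ Q b\<close> with \<open>P a = w1 u\<^sup>a\<close> and
  \<open>Q b = w2 v\<^sup>b w3\<close>. Since \<open>u\<close> and \<open>v\<close> are co-primitive, a common factor of a power of \<open>u\<close>
  and a power of \<open>v\<close> is shorter than \<open>|u| |v|\<close>. Hence only finitely many words are factors both
  of some \<open>P a\<close> and of some \<open>Q b\<close>, and the exponents of \<open>P a @ Q b\<close> are determined by the word.

  Splitting every factor of \<open>P a @ Q b\<close> at the boundary, an induction on formulas shows that the
  truth of an FC formula in \<open>P a @ Q b\<close> is a relation between left data and right data with only
  finitely many distinct rows: connectives and quantifiers preserve this, and in an atom
  \<open>L1 R1 = L2 R2 L3 R3\<close> the pieces overlapping the boundary range over the finite set of common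
  factors. For the language in question this relation is \<open>b = f a\<close>, which has infinitely many
  distinct rows because \<open>f\<close> is injective.\<close>

section \<open>Powers, rotations and factors of words\<close>

lemma length_word_pow [simp]: "length (word_pow z k) = k * length z"
  by (simp add: word_pow_def length_concat sum_list_replicate)

lemma word_pow_0 [simp]: "word_pow z 0 = []"
  by (simp add: word_pow_def)

lemma word_pow_Suc: "word_pow z (Suc k) = z @ word_pow z k"
  by (simp add: word_pow_def)

lemma word_pow_add: "word_pow z (m + n) = word_pow z m @ word_pow z n"
  by (simp add: word_pow_def replicate_add)

lemma word_pow_Suc_right: "word_pow z (Suc k) = word_pow z k @ z"
  using word_pow_add[of z k 1] by (simp add: word_pow_Suc)

lemma word_pow_mult: "word_pow (word_pow z m) k = word_pow z (m * k)"
  by (induction k) (simp_all add: word_pow_Suc word_pow_add[symmetric])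

lemma take_length_word_pow: "0 < k \<Longrightarrow> take (length z) (word_pow z k) = z"
  by (cases k) (simp_all add: word_pow_Suc)

lemma word_pow_conjugate:
  assumes "x @ w = w @ y" shows "word_pow x k @ w = w @ word_pow y k"
proof (induction k)
  case (Suc k)
  have "word_pow x (Suc k) @ w = word_pow x k @ w @ y"
    using assms by (simp add: word_pow_Suc_right)
  also have "\<dots> = w @ word_pow y (Suc k)"
    using Suc by (simp add: word_pow_Suc_right flip: append_assoc)
  finally show ?case .
qed simp

lemma nth_word_pow: "i < k * length z \<Longrightarrow> word_pow z k ! i = z ! (i mod length z)"
proof (induction k arbitrary: i)
  case (Suc k)
  show ?case
  proof (cases "i < length z")
    case False
    then have "(i - length z) mod length z = i mod length z"
      by (simp add: le_mod_geq)
    with False Suc show ?thesis by (simp add: word_pow_Suc nth_append)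
  qed (simp add: word_pow_Suc nth_append)
qed simp

lemma rotate_word_pow: "rotate r (word_pow z k) = word_pow (rotate r z) k"
proof (rule nth_equalityI)
  fix i assume "i < length (rotate r (word_pow z k))"
  then have i: "i < k * length z" by simp
  then have "0 < length z" by (cases "length z") auto
  have "rotate r (word_pow z k) ! i = z ! ((r + i) mod (k * length z) mod length z)"
  proof -
    have "(r + i) mod (k * length z) < k * length z" using i by (intro mod_less_divisor) linarith
    then show ?thesis using i by (simp add: nth_rotate nth_word_pow)
  qed
  also have "\<dots> = rotate r z ! (i mod length z)"
    using \<open>0 < length z\<close> by (simp add: nth_rotate mod_mod_cancel mod_add_right_eq)
  also have "\<dots> = word_pow (rotate r z) k ! i"
    using i by (simp add: nth_word_pow)
  finally show "rotate r (word_pow z k) ! i = word_pow (rotate r z) k ! i" .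
qed simp

lemma rotate_inverse: "rotate (length v - r mod length v) (rotate r v) = v"
proof (cases "v = []")
  case False
  have "r = length v * (r div length v) + r mod length v" "r mod length v < length v"
    using False by simp_all
  then have "length v - r mod length v + r = length v + length v * (r div length v)"
    by linarith
  then show ?thesis by (simp add: rotate_rotate)
qed simp

lemma conjugate_rotate: "conjugate u (rotate r u)"
  unfolding conjugate_def
  by (intro exI[of _ "take (r mod length u) u"] exI[of _ "drop (r mod length u) u"])
     (simp add: rotate_drop_take)

lemma conjugate_if_rotate_eq: "rotate r u = rotate s v \<Longrightarrow> conjugate u v"
  by (metis conjugate_rotate rotate_inverse rotate_rotate)

lemma primitive_rotate: "primitive u \<Longrightarrow> primitive (rotate r u)"
  unfolding primitive_def
  by (metis rotate_inverse rotate_word_pow rotate_is_Nil_conv)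

lemma Facs_eq_sublist: "Facs w = {x. sublist x w}"
  by (simp add: Facs_def sublist_def)

lemma sublist_append_drop: "sublist x (y @ z) \<Longrightarrow> sublist (drop (length y) x) z"
proof (unfold sublist_append, elim disjE exE conjE)
  fix x1 x2 assume x: "x = x1 @ x2" and "suffix x1 y" "prefix x2 z"
  then have "length x1 \<le> length y" by (simp add: suffix_length_le)
  then have "drop (length y) x = drop (length y - length x1) x2" using x by simp
  then show ?thesis
    using \<open>prefix x2 z\<close> by (metis prefix_imp_sublist sublist_drop sublist_order.order_trans)
qed (auto dest: sublist_length_le intro: sublist_order.order_trans)

lemma sublist_append_take: "sublist x (y @ z) \<Longrightarrow> sublist (take (length x - length z) x) y"
proof (unfold sublist_append, elim disjE exE conjE)
  fix x1 x2 assume x: "x = x1 @ x2" and "suffix x1 y" "prefix x2 z"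
  then have "length x2 \<le> length z" by (simp add: prefix_length_le)
  then have "take (length x - length z) x = take (length x - length z) x1" using x by simp
  then show ?thesis
    using \<open>suffix x1 y\<close> by (metis suffix_imp_sublist sublist_take sublist_order.order_trans)
qed (auto dest: sublist_length_le intro: sublist_order.order_trans)

section \<open>Co-primitive words\<close>

lemma word_pow_eq_imp_comm:
  assumes "word_pow x n = word_pow y m" "0 < n" "0 < m"
  shows "x @ y = y @ x"
proof -
  have comm_if_shorter: "x @ y = y @ x"
    if eq: "word_pow x n = word_pow y m" and "0 < n" "0 < m" and le: "length x \<le> length y"
    for x y :: "'a list" and n m
  proof -
    have "take (length x) y = x"
      using take_length_word_pow[of n x] take_length_word_pow[of m y] that
      by (metis min.absorb1 take_take)
    then obtain t where y: "y = x @ t" by (metis append_take_drop_id)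
    have "x @ word_pow (t @ x) m = word_pow (x @ t) m @ x"
      by (rule word_pow_conjugate[symmetric]) simp
    also have "\<dots> = word_pow x n @ x"
      using eq y by simp
    also have "\<dots> = x @ word_pow x n"
      by (rule word_pow_conjugate) simp
    finally have "word_pow (t @ x) m = word_pow (x @ t) m"
      using eq y by simp
    then have "t @ x = x @ t"
      using take_length_word_pow[of m "t @ x"] take_length_word_pow[of m "x @ t"] \<open>0 < m\<close>
      by (metis add.commute length_append)
    then show ?thesis using y by simp
  qed
  show ?thesis
    using comm_if_shorter[OF assms] comm_if_shorter[OF assms(1)[symmetric] assms(3,2)]
    by (metis nat_le_linear)
qed

lemma primitive_comm_imp_eq:
  assumes "primitive x" "primitive y" "x @ y = y @ x"
  shows "x = y"
proof -
  have root: "k = 1" if "primitive (word_pow z k)" for z :: "'a list" and k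
    using that unfolding primitive_def by (metis less_one nat_neq_iff word_pow_0)
  obtain i j z where "word_pow z i = x" "word_pow z j = y"
    using comm_append_are_replicate[OF assms(3)] unfolding word_pow_def by blast
  with root assms(1,2) show ?thesis
    by (metis One_nat_def append_Nil2 word_pow_0 word_pow_Suc)
qed

lemma primitive_word_pow_eq:
  assumes "primitive x" "primitive y" "word_pow x n = word_pow y m" "0 < n" "0 < m"
  shows "x = y"
  using assms primitive_comm_imp_eq word_pow_eq_imp_comm by blast

lemma sublist_word_pow_prefix:
  assumes "sublist z (word_pow u N)" "k * length u \<le> length z"
  shows "\<exists>r. take (k * length u) z = word_pow (rotate r u) k"
proof -
  obtain p s where eq: "word_pow u N = p @ z @ s" using assms(1) by (auto simp: sublist_def)
  show ?thesis
  proof (intro exI nth_equalityI)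
    fix i assume "i < length (take (k * length u) z)"
    then have i: "i < k * length u" "i < length z" using assms(2) by auto
    have "length p + i < N * length u"
      using i arg_cong[OF eq, of length] by simp
    then have "z ! i = u ! ((length p + i) mod length u)"
      using eq i by (metis nth_append_length_plus nth_append nth_word_pow)
    also have "\<dots> = word_pow (rotate (length p) u) k ! i"
    proof -
      have "0 < length u" using i(1) by (cases "length u") auto
      then show ?thesis using i by (simp add: nth_word_pow nth_rotate mod_add_right_eq)
    qed
    finally show "take (k * length u) z ! i = word_pow (rotate (length p) u) k ! i"
      using i by simp
  qed (use assms(2) in simp)
qed

text \<open>A weak Fine--Wilf bound: a common factor of length \<open>|u| |v|\<close> would begin with
  \<open>(rotate r u)\<^bsup>|v|\<^esup> = (rotate s v)\<^bsup>|u|\<^esup>\<close>, forcing \<open>u\<close> and \<open>v\<close> to be conjugate.\<close>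
lemma co_primitive_common_sublist_short:
  assumes "co_primitive u v" "sublist z (word_pow u N)" "sublist z (word_pow v M)"
  shows "length z < length u * length v"
proof (rule ccontr)
  assume "\<not> ?thesis"
  then have len: "length v * length u \<le> length z" "length u * length v \<le> length z"
    by (simp_all add: mult.commute)
  have pu: "primitive u" and pv: "primitive v" and nc: "\<not> conjugate u v"
    using assms(1) by (auto simp: co_primitive_def)
  obtain r where r: "take (length v * length u) z = word_pow (rotate r u) (length v)"
    using sublist_word_pow_prefix[OF assms(2) len(1)] by blast
  obtain s where s: "take (length u * length v) z = word_pow (rotate s v) (length u)"
    using sublist_word_pow_prefix[OF assms(3) len(2)] by blast
  have "0 < length u" "0 < length v" using pu pv by (auto simp: primitive_def)
  then have "rotate r u = rotate s v"
    using r s primitive_word_pow_eq[OF primitive_rotate[OF pu] primitive_rotate[OF pv]]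
    by (metis mult.commute)
  then show False using nc conjugate_if_rotate_eq by blast
qed

lemma co_primitive_no_conjugating_powers:
  assumes "co_primitive u v" "0 < e"
  shows "word_pow u e @ w \<noteq> w @ word_pow v g"
proof
  assume eq: "word_pow u e @ w = w @ word_pow v g"
  have "0 < length u" using assms(1) by (auto simp: co_primitive_def primitive_def)
  define k where "k = length w + length u * length v"
  have eqk: "word_pow u (e * k) @ w = w @ word_pow v (g * k)"
    using word_pow_conjugate[OF eq, of k] by (simp add: word_pow_mult)
  have "k \<le> e * k * length u"
    using assms(2) \<open>0 < length u\<close> by (simp add: Suc_le_eq)
  moreover have "length w \<le> k" by (simp add: k_def)
  ultimately have long: "length w \<le> length (word_pow u (e * k))"
    by (simp only: length_word_pow)
  define c where "c = drop (length w) (word_pow u (e * k))"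
  have "c @ w = word_pow v (g * k)"
    using arg_cong[OF eqk, of "drop (length w)"] long unfolding c_def by simp
  then have c_short: "length c < length u * length v"
    using co_primitive_common_sublist_short[OF assms(1)] unfolding c_def
    by (metis sublist_append_rightI sublist_drop)
  have "length c = e * k * length u - length w"
    by (simp add: c_def)
  then show False
    using c_short \<open>k \<le> e * k * length u\<close> k_def by linarith
qed

lemma co_primitive_pattern_inj:
  assumes "co_primitive u v"
    and "x @ word_pow u a @ y @ word_pow v b @ z = x @ word_pow u c @ y @ word_pow v d @ z"
  shows "a = c \<and> b = d"
proof -
  have "0 < length u" "0 < length v" using assms(1) by (auto simp: co_primitive_def primitive_def)
  have inj_if_le: "a = c \<and> b = d"
    if eq: "word_pow u a @ y @ word_pow v b = word_pow u c @ y @ word_pow v d" and "a \<le> c"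
    for a b c d
  proof (cases "a = c")
    case True
    then show ?thesis using arg_cong[OF eq, of length] \<open>0 < length v\<close> by simp
  next
    case False
    with \<open>a \<le> c\<close> have "a < c" by simp
    have "a * length u + b * length v = c * length u + d * length v"
      using arg_cong[OF eq, of length] by simp
    moreover have "a * length u < c * length u"
      using \<open>a < c\<close> \<open>0 < length u\<close> by simp
    ultimately have "d * length v < b * length v" by linarith
    then have "d < b" using mult_less_cancel2 by blast
    have uc: "word_pow u c = word_pow u a @ word_pow u (c - a)"
      using \<open>a < c\<close> by (simp flip: word_pow_add)
    have vb: "word_pow v b = word_pow v (b - d) @ word_pow v d"
      using \<open>d < b\<close> by (simp flip: word_pow_add)
    have "word_pow u (c - a) @ y = y @ word_pow v (b - d)"
      using eq unfolding uc vb by simp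
    then show ?thesis
      using co_primitive_no_conjugating_powers[OF assms(1)] \<open>a < c\<close> by simp
  qed
  have "word_pow u a @ y @ word_pow v b = word_pow u c @ y @ word_pow v d"
    using assms(2) by simp
  then show ?thesis
    using inj_if_le inj_if_le[OF sym] by (metis nat_le_linear)
qed

lemma co_primitive_common_sublist_bound:
  assumes "co_primitive u v"
    and "sublist x (w1 @ word_pow u a)" "sublist x (w2 @ word_pow v b @ w3)"
  shows "length x < length w1 + length w2 + length w3 + length u * length v"
proof -
  define y where "y = take (length x - length w2 - length w3) (drop (length w2) x)"
  define c where "c = drop (length w1) y"
  have "sublist y (word_pow v b)"
    using sublist_append_take[OF sublist_append_drop[OF assms(3)]] by (simp add: y_def)
  then have "sublist c (word_pow v b)"
    unfolding c_def by (metis sublist_drop sublist_order.order_trans)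
  moreover have "sublist c (word_pow u a)"
  proof -
    have "c = take (length x - length w1 - length w2 - length w3) (drop (length w2) (drop (length w1) x))"
      by (simp add: c_def y_def drop_take ac_simps)
    then show ?thesis
      using sublist_append_drop[OF assms(2)]
      by (metis sublist_take sublist_drop sublist_order.order_trans)
  qed
  ultimately have "length c < length u * length v"
    using co_primitive_common_sublist_short[OF assms(1)] by blast
  then show ?thesis by (simp add: c_def y_def)
qed

section \<open>Relations of finite rank\<close>

definition finite_rank :: "('r \<Rightarrow> 'c \<Rightarrow> bool) \<Rightarrow> bool" where
  "finite_rank S \<longleftrightarrow> finite (range S)"

lemma finite_rank_conj:
  assumes "finite_rank S" "finite_rank T"
  shows "finite_rank (\<lambda>A B. S A B \<and> T A B)"
proof -
  have "range (\<lambda>A B. S A B \<and> T A B) \<subseteq> (\<lambda>(s, t) B. s B \<and> t B) ` (range S \<times> range T)"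
    by auto
  then show ?thesis
    using assms unfolding finite_rank_def by (meson finite_SigmaI finite_imageI finite_subset)
qed

lemma finite_rank_disj:
  assumes "finite_rank S" "finite_rank T"
  shows "finite_rank (\<lambda>A B. S A B \<or> T A B)"
proof -
  have "range (\<lambda>A B. S A B \<or> T A B) \<subseteq> (\<lambda>(s, t) B. s B \<or> t B) ` (range S \<times> range T)"
    by auto
  then show ?thesis
    using assms unfolding finite_rank_def by (meson finite_SigmaI finite_imageI finite_subset)
qed

lemma finite_rank_neg:
  assumes "finite_rank S"
  shows "finite_rank (\<lambda>A B. \<not> S A B)"
proof -
  have "range (\<lambda>A B. \<not> S A B) = (\<lambda>s B. \<not> s B) ` range S" by auto
  then show ?thesis using assms unfolding finite_rank_def by simp
qed

lemma finite_rank_left: "finite_rank (\<lambda>A B. p A)"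
proof -
  have "range (\<lambda>A B. p A) \<subseteq> {\<lambda>B. True, \<lambda>B. False}" by auto
  then show ?thesis unfolding finite_rank_def by (rule finite_subset) simp
qed

lemma finite_rank_right: "finite_rank (\<lambda>A B. q B)"
  unfolding finite_rank_def by simp

lemma finite_rank_compose:
  assumes "finite_rank S"
  shows "finite_rank (\<lambda>A B. S (f A) (g B))"
proof -
  have "range (\<lambda>A B. S (f A) (g B)) \<subseteq> (\<lambda>s B. s (g B)) ` range S" by auto
  then show ?thesis using assms unfolding finite_rank_def by (meson finite_imageI finite_subset)
qed

text \<open>The row of \<open>A\<close> is determined by the finite set of rows \<open>S (f A L)\<close>, \<open>L \<in> G A\<close>.\<close>
lemma finite_rank_bex:
  assumes "finite_rank S"
  shows "finite_rank (\<lambda>A B. \<exists>L\<in>G A. \<exists>R\<in>H B. S (f A L) (g B R))"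
proof -
  have "range (\<lambda>A B. \<exists>L\<in>G A. \<exists>R\<in>H B. S (f A L) (g B R))
      \<subseteq> (\<lambda>X B. \<exists>s\<in>X. \<exists>R\<in>H B. s (g B R)) ` Pow (range S)"
  proof
    fix c assume "c \<in> range (\<lambda>A B. \<exists>L\<in>G A. \<exists>R\<in>H B. S (f A L) (g B R))"
    then obtain A where "c = (\<lambda>B. \<exists>L\<in>G A. \<exists>R\<in>H B. S (f A L) (g B R))" by blast
    then have "c = (\<lambda>B. \<exists>s\<in>(\<lambda>L. S (f A L)) ` G A. \<exists>R\<in>H B. s (g B R))" by auto
    then show "c \<in> (\<lambda>X B. \<exists>s\<in>X. \<exists>R\<in>H B. s (g B R)) ` Pow (range S)" by blast
  qed
  then show ?thesis
    using assms unfolding finite_rank_def by (meson finite_Pow_iff finite_imageI finite_subset)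
qed

lemma finite_rank_union_rectangles:
  assumes "finite F"
  shows "finite_rank (\<lambda>A B. \<exists>d\<in>F. g d A \<and> h d B)"
proof -
  have "range (\<lambda>A B. \<exists>d\<in>F. g d A \<and> h d B) \<subseteq> (\<lambda>D B. \<exists>d\<in>D. h d B) ` Pow F"
  proof
    fix c assume "c \<in> range (\<lambda>A B. \<exists>d\<in>F. g d A \<and> h d B)"
    then obtain A where "c = (\<lambda>B. \<exists>d\<in>F. g d A \<and> h d B)" by blast
    then have "c = (\<lambda>B. \<exists>d\<in>{d\<in>F. g d A}. h d B)" by auto
    then show "c \<in> (\<lambda>D B. \<exists>d\<in>D. h d B) ` Pow F" by blast
  qed
  then show ?thesis
    using assms unfolding finite_rank_def by (meson finite_Pow_iff finite_imageI finite_subset)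
qed

lemma inj_graph_not_finite_rank:
  assumes "inj f" "infinite (UNIV :: 'a set)"
  shows "\<not> finite_rank (\<lambda>(a :: 'a) b. b = f a)"
proof
  assume "finite_rank (\<lambda>a b. b = f a)"
  moreover have "inj (\<lambda>a b. b = f a)"
    using assms(1) by (auto intro!: injI dest: fun_cong[where x = "f _"] simp: inj_eq)
  ultimately show False
    using assms(2) unfolding finite_rank_def by (blast dest: finite_imageD)
qed

section \<open>Equations between words split into left and right pieces\<close>

definition infix_closed :: "'a list set \<Rightarrow> bool" where
  "infix_closed A \<longleftrightarrow> (\<forall>x\<in>A. \<forall>y. sublist y x \<longrightarrow> y \<in> A)"

lemma infix_closedD: "infix_closed A \<Longrightarrow> x \<in> A \<Longrightarrow> x = p @ y @ s \<Longrightarrow> y \<in> A"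
  unfolding infix_closed_def by blast

lemma append_eq_append4_cases:
  assumes "L1 @ R1 = L2 @ R2 @ L3 @ R3"
  obtains D where "L2 = L1 @ D" "R1 = D @ R2 @ L3 @ R3"
  | D E where "L1 = L2 @ D" "R2 = D @ E" "R1 = E @ L3 @ R3"
  | D E where "L1 = L2 @ R2 @ D" "L3 = D @ E" "R1 = E @ R3"
  | D where "L1 = L2 @ R2 @ L3 @ D" "R3 = D @ R1"
  using assms by (fastforce simp: append_eq_append_conv2)

lemma append_eq_append4_iff:
  assumes A: "infix_closed A" and B: "infix_closed B"
    and L: "L1 \<in> A" "L2 \<in> A" "L3 \<in> A" and R: "R1 \<in> B" "R2 \<in> B" "R3 \<in> B"
  shows "L1 @ R1 = L2 @ R2 @ L3 @ R3 \<longleftrightarrow>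
    (\<exists>(D, E) \<in> (A \<inter> B) \<times> (A \<inter> B). L2 = L1 @ D \<and> L3 = E \<and> R1 = D @ R2 @ E @ R3) \<or>
    (\<exists>(D, E) \<in> (A \<inter> B) \<times> (A \<inter> B). L1 = L2 @ D \<and> L3 = E \<and> (\<exists>E'. R2 = D @ E' \<and> R1 = E' @ E @ R3)) \<or>
    (\<exists>(D, E) \<in> (A \<inter> B) \<times> (A \<inter> B). (\<exists>D'. L1 = L2 @ D @ D' \<and> L3 = D' @ E) \<and> R2 = D \<and> R1 = E @ R3) \<or>
    (\<exists>(D, E) \<in> (A \<inter> B) \<times> (A \<inter> B). L1 = L2 @ D @ L3 @ E \<and> R2 = D \<and> R3 = E @ R1)"
    (is "_ \<longleftrightarrow> ?cases")
proof
  assume "L1 @ R1 = L2 @ R2 @ L3 @ R3"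
  then show ?cases
  proof (cases rule: append_eq_append4_cases)
    case (1 D)
    then have "(D, L3) \<in> (A \<inter> B) \<times> (A \<inter> B)"
      using L R infix_closedD[OF A L(2), of L1 D "[]"] infix_closedD[OF B R(1), of "[]" D]
        infix_closedD[OF B R(1), of "D @ R2" L3 R3] by simp
    then show ?thesis using 1 by blast
  next
    case (2 D E)
    then have "(D, L3) \<in> (A \<inter> B) \<times> (A \<inter> B)"
      using L R infix_closedD[OF A L(1), of L2 D "[]"] infix_closedD[OF B R(2), of "[]" D]
        infix_closedD[OF B R(1), of E L3 R3] by simp
    then show ?thesis using 2 by blast
  next
    case (3 D E)
    then have "(R2, E) \<in> (A \<inter> B) \<times> (A \<inter> B)"
      using L R infix_closedD[OF A L(1), of L2 R2 D] infix_closedD[OF A L(3), of D E "[]"]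
        infix_closedD[OF B R(1), of "[]" E] by simp
    then show ?thesis using 3 by blast
  next
    case (4 D)
    then have "(R2, D) \<in> (A \<inter> B) \<times> (A \<inter> B)"
      using L R infix_closedD[OF A L(1), of L2 R2 "L3 @ D"]
        infix_closedD[OF A L(1), of "L2 @ R2 @ L3" D "[]"] infix_closedD[OF B R(3), of "[]" D]
      by simp
    then show ?thesis using 4 by blast
  qed
next
  assume ?cases
  then show "L1 @ R1 = L2 @ R2 @ L3 @ R3"
    by auto
qed

lemma finite_rank_append_eq:
  fixes A B :: "'a list set"
  assumes fin: "finite (A \<inter> B)" and A: "infix_closed A" and B: "infix_closed B"
  shows "finite_rank (\<lambda>(L1, L2, L3) (R1, R2, R3).
    {L1, L2, L3} \<subseteq> A \<and> {R1, R2, R3} \<subseteq> B \<and> L1 @ R1 = L2 @ R2 @ L3 @ R3)"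
    (is "finite_rank ?S")
proof -
  define F where "F = (A \<inter> B) \<times> (A \<inter> B)"
  have "finite F" using fin by (simp add: F_def)
  define l1 r1 :: "'a list \<times> 'a list \<Rightarrow> 'a list \<times> 'a list \<times> 'a list \<Rightarrow> bool" where
    "l1 = (\<lambda>(D, E) (L1, L2, L3). L2 = L1 @ D \<and> L3 = E)" and
    "r1 = (\<lambda>(D, E) (R1, R2, R3). R1 = D @ R2 @ E @ R3)"
  define l2 r2 :: "'a list \<times> 'a list \<Rightarrow> 'a list \<times> 'a list \<times> 'a list \<Rightarrow> bool" where
    "l2 = (\<lambda>(D, E) (L1, L2, L3). L1 = L2 @ D \<and> L3 = E)" and
    "r2 = (\<lambda>(D, E) (R1, R2, R3). \<exists>E'. R2 = D @ E' \<and> R1 = E' @ E @ R3)"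
  define l3 r3 :: "'a list \<times> 'a list \<Rightarrow> 'a list \<times> 'a list \<times> 'a list \<Rightarrow> bool" where
    "l3 = (\<lambda>(D, E) (L1, L2, L3). \<exists>D'. L1 = L2 @ D @ D' \<and> L3 = D' @ E)" and
    "r3 = (\<lambda>(D, E) (R1, R2, R3). R2 = D \<and> R1 = E @ R3)"
  define l4 r4 :: "'a list \<times> 'a list \<Rightarrow> 'a list \<times> 'a list \<times> 'a list \<Rightarrow> bool" where
    "l4 = (\<lambda>(D, E) (L1, L2, L3). L1 = L2 @ D @ L3 @ E)" and
    "r4 = (\<lambda>(D, E) (R1, R2, R3). R2 = D \<and> R3 = E @ R1)"
  define inA inB :: "'a list \<times> 'a list \<times> 'a list \<Rightarrow> bool" where
    "inA = (\<lambda>(L1, L2, L3). {L1, L2, L3} \<subseteq> A)" and "inB = (\<lambda>(R1, R2, R3). {R1, R2, R3} \<subseteq> B)"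
  have "?S = (\<lambda>l r. inA l \<and> inB r \<and>
      (((\<exists>d\<in>F. l1 d l \<and> r1 d r) \<or> (\<exists>d\<in>F. l2 d l \<and> r2 d r)) \<or>
       ((\<exists>d\<in>F. l3 d l \<and> r3 d r) \<or> (\<exists>d\<in>F. l4 d l \<and> r4 d r))))"
    unfolding inA_def inB_def F_def l1_def r1_def l2_def r2_def l3_def r3_def l4_def r4_def
    by (auto simp: fun_eq_iff append_eq_append4_iff[OF A B] simp del: Set.bex_simps)
  moreover have "finite_rank \<dots>"
    by (intro finite_rank_conj finite_rank_disj finite_rank_left finite_rank_right
        finite_rank_union_rectangles \<open>finite F\<close>)
  ultimately show ?thesis by simp
qed

section \<open>FC formulas evaluated on a concatenation\<close>

text \<open>A factor of \<open>P @ Q\<close> is represented by the pair of its parts in \<open>P\<close> and in \<open>Q\<close>.\<close>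
definition boundary_splits :: "'a list \<Rightarrow> 'a list \<Rightarrow> ('a list \<times> 'a list) set" where
  "boundary_splits P Q =
    {(L, R). (sublist L P \<and> R = []) \<or> (L = [] \<and> sublist R Q) \<or> (suffix L P \<and> prefix R Q)}"

lemma sublist_append_iff_boundary_split:
  "sublist x (P @ Q) \<longleftrightarrow> (\<exists>(L, R) \<in> boundary_splits P Q. x = L @ R)"
proof
  assume "sublist x (P @ Q)"
  then consider "sublist x P" | "sublist x Q" | x1 x2 where "x = x1 @ x2" "suffix x1 P" "prefix x2 Q"
    unfolding sublist_append by blast
  then show "\<exists>(L, R) \<in> boundary_splits P Q. x = L @ R"
  proof cases
    case 1
    then show ?thesis by (intro bexI[of _ "(x, [])"]) (simp_all add: boundary_splits_def)
  next
    case 2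
    then show ?thesis by (intro bexI[of _ "([], x)"]) (simp_all add: boundary_splits_def)
  next
    case (3 x1 x2)
    then show ?thesis by (intro bexI[of _ "(x1, x2)"]) (simp_all add: boundary_splits_def)
  qed
next
  assume "\<exists>(L, R) \<in> boundary_splits P Q. x = L @ R"
  then obtain L R where LR: "(L, R) \<in> boundary_splits P Q" "x = L @ R" by blast
  from LR(1) consider "sublist L P" "R = []" | "L = []" "sublist R Q" | "suffix L P" "prefix R Q"
    unfolding boundary_splits_def by auto
  then show "sublist x (P @ Q)"
  proof cases
    case 3
    then obtain P' Q' where "P = P' @ L" "Q = R @ Q'" by (auto simp: suffix_def prefix_def)
    then show ?thesis using LR(2) sublist_appendI[of "L @ R" P' Q'] by simp
  qed (use LR(2) sublist_order.order_trans in auto)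
qed

definition split_valuation :: "'a list \<Rightarrow> 'a list \<Rightarrow> (nat \<Rightarrow> 'a list) \<Rightarrow> (nat \<Rightarrow> 'a list) \<Rightarrow> bool"
  where "split_valuation P Q \<alpha> \<beta> \<longleftrightarrow> (\<forall>x. (\<alpha> x, \<beta> x) \<in> boundary_splits P Q)"

lemma split_valuation_upd:
  "split_valuation P Q \<alpha> \<beta> \<Longrightarrow> (L, R) \<in> boundary_splits P Q \<Longrightarrow>
    split_valuation P Q (\<alpha>(x := L)) (\<beta>(x := R))"
  unfolding split_valuation_def by simp

fun term_left :: "(nat \<Rightarrow> 'a list) \<Rightarrow> 'a fc_term \<Rightarrow> 'a list" where
  "term_left \<alpha> (FVar x) = \<alpha> x"
| "term_left \<alpha> (FLet c) = [c]"
| "term_left \<alpha> FEps = []"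

fun term_right :: "(nat \<Rightarrow> 'a list) \<Rightarrow> 'a fc_term \<Rightarrow> 'a list" where
  "term_right \<beta> (FVar x) = \<beta> x"
| "term_right \<beta> (FLet c) = []"
| "term_right \<beta> FEps = []"

fun term_defined :: "'a list \<Rightarrow> 'a fc_term \<Rightarrow> bool" where
  "term_defined W (FLet c) \<longleftrightarrow> c \<in> set W"
| "term_defined W (FVar x) \<longleftrightarrow> True"
| "term_defined W FEps \<longleftrightarrow> True"

lemma term_defined_append: "term_defined (P @ Q) t \<longleftrightarrow> term_defined P t \<or> term_defined Q t"
  by (cases t) auto

lemma eval_term_split:
  "eval_term W (\<lambda>x. \<alpha> x @ \<beta> x) t =
    (if term_defined W t then Some (term_left \<alpha> t @ term_right \<beta> t) else None)"
  by (cases t) auto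

lemma split_term_sublist:
  assumes "split_valuation P Q \<alpha> \<beta>" "term_defined (P @ Q) t"
  shows "sublist (term_left \<alpha> t @ term_right \<beta> t) (P @ Q)"
proof (cases t)
  case (FVar x)
  then show ?thesis
    using assms(1) by (force simp: split_valuation_def sublist_append_iff_boundary_split)
next
  case (FLet c)
  then obtain ps ss where "P @ Q = ps @ [c] @ ss"
    using assms(2) split_list[of c "P @ Q"] by auto
  then have "sublist [c] (P @ Q)" by (metis sublist_appendI)
  then show ?thesis using FLet by simp
qed simp_all

lemma sat_atom_split:
  assumes "split_valuation P Q \<alpha> \<beta>"
  shows "sat (P @ Q) (\<lambda>x. \<alpha> x @ \<beta> x) (FAtom t1 t2 t3) \<longleftrightarrow>
    term_defined (P @ Q) t1 \<and> term_defined (P @ Q) t2 \<and> term_defined (P @ Q) t3 \<and>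
    term_left \<alpha> t1 @ term_right \<beta> t1 =
      term_left \<alpha> t2 @ term_right \<beta> t2 @ term_left \<alpha> t3 @ term_right \<beta> t3"
  using split_term_sublist[OF assms] by (auto simp: eval_term_split Facs_eq_sublist)

text \<open>Words of length at most one are included because a letter constant contributes its letter
  to the left component whether or not it occurs in the left word.\<close>
definition factor_closure :: "('i \<Rightarrow> 'a list) \<Rightarrow> 'a list set" where
  "factor_closure P = {x. \<exists>i. sublist x (P i)} \<union> {x. length x \<le> 1}"

lemma infix_closed_factor_closure: "infix_closed (factor_closure P)"
  unfolding infix_closed_def factor_closure_def
  by (auto dest: sublist_length_le intro: sublist_order.order_trans)

lemma split_valuation_factor_closure:
  assumes "split_valuation (P i) (Q j) \<alpha> \<beta>"
  shows "term_left \<alpha> t \<in> factor_closure P" "term_right \<beta> t \<in> factor_closure Q"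
proof -
  have "sublist (\<alpha> x) (P i) \<and> sublist (\<beta> x) (Q j)" for x
  proof -
    have "(\<alpha> x, \<beta> x) \<in> boundary_splits (P i) (Q j)"
      using assms by (simp add: split_valuation_def)
    then show ?thesis by (auto simp: boundary_splits_def)
  qed
  then show "term_left \<alpha> t \<in> factor_closure P" "term_right \<beta> t \<in> factor_closure Q"
    by (cases t; auto simp: factor_closure_def)+
qed

definition sat_decomposes :: "('i \<Rightarrow> 'a list) \<Rightarrow> ('j \<Rightarrow> 'a list) \<Rightarrow> 'a fc \<Rightarrow>
    ('i \<times> (nat \<Rightarrow> 'a list) \<Rightarrow> 'j \<times> (nat \<Rightarrow> 'a list) \<Rightarrow> bool) \<Rightarrow> bool" where
  "sat_decomposes P Q \<phi> S \<longleftrightarrow> (\<forall>i j \<alpha> \<beta>. split_valuation (P i) (Q j) \<alpha> \<beta> \<longrightarrow>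
      (sat (P i @ Q j) (\<lambda>x. \<alpha> x @ \<beta> x) \<phi> \<longleftrightarrow> S (i, \<alpha>) (j, \<beta>)))"

lemma sat_decomposes_neg:
  "sat_decomposes P Q \<phi> S \<Longrightarrow> sat_decomposes P Q (FNot \<phi>) (\<lambda>A B. \<not> S A B)"
  by (simp add: sat_decomposes_def)

lemma sat_decomposes_conj:
  "sat_decomposes P Q \<phi> S \<Longrightarrow> sat_decomposes P Q \<psi> T \<Longrightarrow>
    sat_decomposes P Q (FAnd \<phi> \<psi>) (\<lambda>A B. S A B \<and> T A B)"
  by (simp add: sat_decomposes_def)

lemma sat_decomposes_disj:
  "sat_decomposes P Q \<phi> S \<Longrightarrow> sat_decomposes P Q \<psi> T \<Longrightarrow>
    sat_decomposes P Q (FOr \<phi> \<psi>) (\<lambda>A B. S A B \<or> T A B)"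
  by (simp add: sat_decomposes_def)

lemma sat_decomposes_ex:
  assumes "sat_decomposes P Q \<phi> S"
  shows "sat_decomposes P Q (FEx x \<phi>) (\<lambda>A B. \<exists>(L, R) \<in> boundary_splits (P (fst A)) (Q (fst B)).
    S (fst A, (snd A)(x := L)) (fst B, (snd B)(x := R)))"
  unfolding sat_decomposes_def
proof (intro allI impI)
  fix i j \<alpha> \<beta> assume split: "split_valuation (P i) (Q j) \<alpha> \<beta>"
  have upd: "(\<lambda>y. \<alpha> y @ \<beta> y)(x := L @ R) = (\<lambda>y. (\<alpha>(x := L)) y @ (\<beta>(x := R)) y)" for L R
    by auto
  have "sat (P i @ Q j) (\<lambda>y. \<alpha> y @ \<beta> y) (FEx x \<phi>) \<longleftrightarrow>
      (\<exists>(L, R) \<in> boundary_splits (P i) (Q j). sat (P i @ Q j) ((\<lambda>y. \<alpha> y @ \<beta> y)(x := L @ R)) \<phi>)"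
    by (auto simp: Facs_eq_sublist sublist_append_iff_boundary_split simp del: fun_upd_apply)
  also have "\<dots> \<longleftrightarrow> (\<exists>(L, R) \<in> boundary_splits (P i) (Q j).
        sat (P i @ Q j) (\<lambda>y. (\<alpha>(x := L)) y @ (\<beta>(x := R)) y) \<phi>)"
    by (simp only: upd)
  also have "\<dots> \<longleftrightarrow> (\<exists>(L, R) \<in> boundary_splits (P i) (Q j). S (i, \<alpha>(x := L)) (j, \<beta>(x := R)))"
  proof -
    have "sat (P i @ Q j) (\<lambda>y. (\<alpha>(x := L)) y @ (\<beta>(x := R)) y) \<phi> \<longleftrightarrow>
        S (i, \<alpha>(x := L)) (j, \<beta>(x := R))" if "(L, R) \<in> boundary_splits (P i) (Q j)" for L R
      using assms split_valuation_upd[OF split that] unfolding sat_decomposes_def by blast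
    then show ?thesis by (intro bex_cong) auto
  qed
  finally show "sat (P i @ Q j) (\<lambda>y. \<alpha> y @ \<beta> y) (FEx x \<phi>) \<longleftrightarrow>
    (\<exists>(L, R) \<in> boundary_splits (P (fst (i, \<alpha>))) (Q (fst (j, \<beta>))).
      S (fst (i, \<alpha>), (snd (i, \<alpha>))(x := L)) (fst (j, \<beta>), (snd (j, \<beta>))(x := R)))"
    by simp
qed

lemma finite_rank_bex_boundary_splits:
  assumes "finite_rank S"
  shows "finite_rank (\<lambda>A B. \<exists>(L, R) \<in> boundary_splits (p A) (q B). S (f A L) (g B R))"
proof -
  have "(\<exists>(L, R) \<in> boundary_splits (p A) (q B). S (f A L) (g B R)) \<longleftrightarrow>
      ((\<exists>L\<in>{L. sublist L (p A)}. \<exists>R\<in>{[]}. S (f A L) (g B R)) \<or>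
       (\<exists>L\<in>{[]}. \<exists>R\<in>{R. sublist R (q B)}. S (f A L) (g B R))) \<or>
      (\<exists>L\<in>{L. suffix L (p A)}. \<exists>R\<in>{R. prefix R (q B)}. S (f A L) (g B R))" for A B
    unfolding boundary_splits_def Bex_def by auto
  moreover have "finite_rank (\<lambda>A B.
      ((\<exists>L\<in>{L. sublist L (p A)}. \<exists>R\<in>{[]}. S (f A L) (g B R)) \<or>
       (\<exists>L\<in>{[]}. \<exists>R\<in>{R. sublist R (q B)}. S (f A L) (g B R))) \<or>
      (\<exists>L\<in>{L. suffix L (p A)}. \<exists>R\<in>{R. prefix R (q B)}. S (f A L) (g B R)))"
    by (intro finite_rank_disj finite_rank_bex assms)
  ultimately show ?thesis by simp
qed

lemma sat_decomposes_atom: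
  fixes P :: "'i \<Rightarrow> 'a list" and Q :: "'j \<Rightarrow> 'a list"
  assumes "finite (factor_closure P \<inter> factor_closure Q)"
  shows "\<exists>S. finite_rank S \<and> sat_decomposes P Q (FAtom t1 t2 t3) S"
proof -
  define split_eq :: "'a list \<times> 'a list \<times> 'a list \<Rightarrow> 'a list \<times> 'a list \<times> 'a list \<Rightarrow> bool" where
    "split_eq = (\<lambda>(L1, L2, L3) (R1, R2, R3). {L1, L2, L3} \<subseteq> factor_closure P \<and>
      {R1, R2, R3} \<subseteq> factor_closure Q \<and> L1 @ R1 = L2 @ R2 @ L3 @ R3)"
  define defined :: "'a fc_term \<Rightarrow> 'i \<times> (nat \<Rightarrow> 'a list) \<Rightarrow> 'j \<times> (nat \<Rightarrow> 'a list) \<Rightarrow> bool"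
    where "defined t A B \<longleftrightarrow> term_defined (P (fst A)) t \<or> term_defined (Q (fst B)) t" for t A B
  define lefts rights :: "(nat \<Rightarrow> 'a list) \<Rightarrow> 'a list \<times> 'a list \<times> 'a list" where
    "lefts \<alpha> = (term_left \<alpha> t1, term_left \<alpha> t2, term_left \<alpha> t3)" and
    "rights \<beta> = (term_right \<beta> t1, term_right \<beta> t2, term_right \<beta> t3)" for \<alpha> \<beta>
  define S where
    "S A B \<longleftrightarrow> defined t1 A B \<and> defined t2 A B \<and> defined t3 A B \<and> split_eq (lefts (snd A)) (rights (snd B))"
    for A B
  have "finite_rank split_eq"
    unfolding split_eq_def using finite_rank_append_eq[OF assms infix_closed_factor_closure
        infix_closed_factor_closure] .
  then have "finite_rank (\<lambda>A B. split_eq (lefts (snd A)) (rights (snd B)))"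
    by (rule finite_rank_compose)
  then have "finite_rank S"
    unfolding S_def defined_def
    by (intro finite_rank_conj finite_rank_disj finite_rank_left finite_rank_right)
  moreover have "sat_decomposes P Q (FAtom t1 t2 t3) S"
    unfolding sat_decomposes_def
  proof (intro allI impI)
    fix i j \<alpha> \<beta> assume split: "split_valuation (P i) (Q j) \<alpha> \<beta>"
    then show "sat (P i @ Q j) (\<lambda>x. \<alpha> x @ \<beta> x) (FAtom t1 t2 t3) \<longleftrightarrow> S (i, \<alpha>) (j, \<beta>)"
      unfolding sat_atom_split[OF split] S_def defined_def split_eq_def lefts_def rights_def
      by (simp add: term_defined_append split_valuation_factor_closure)
  qed
  ultimately show ?thesis by blast
qed

theorem sat_decomposes_finite_rank:
  assumes "finite (factor_closure P \<inter> factor_closure Q)"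
  shows "\<exists>S. finite_rank S \<and> sat_decomposes P Q \<phi> S"
proof -
  have ex: "\<exists>S'. finite_rank S' \<and> sat_decomposes P Q (FEx x \<psi>) S'"
    if "finite_rank S" "sat_decomposes P Q \<psi> S" for x \<psi> S
    using sat_decomposes_ex[OF that(2)] finite_rank_bex_boundary_splits[OF that(1),
        where p = "\<lambda>A. P (fst A)" and q = "\<lambda>B. Q (fst B)"
        and f = "\<lambda>A L. (fst A, (snd A)(x := L))" and g = "\<lambda>B R. (fst B, (snd B)(x := R))"]
    by blast
  show ?thesis
  proof (induction \<phi>)
    case FAtom
    then show ?case using sat_decomposes_atom[OF assms] by blast
  next
    case FAnd
    then show ?case using finite_rank_conj sat_decomposes_conj by blast
  next
    case FOr
    then show ?case using finite_rank_disj sat_decomposes_disj by blast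
  next
    case FNot
    then show ?case using finite_rank_neg sat_decomposes_neg by blast
  next
    case FEx
    then show ?case using ex by blast
  next
    case (FAll x \<phi>)
    then obtain S where "finite_rank S" "sat_decomposes P Q (FEx x (FNot \<phi>)) S"
      using ex finite_rank_neg sat_decomposes_neg by blast
    then have "finite_rank (\<lambda>A B. \<not> S A B)"
      "sat_decomposes P Q (FNot (FEx x (FNot \<phi>))) (\<lambda>A B. \<not> S A B)"
      by (simp_all add: finite_rank_neg sat_decomposes_neg)
    then show ?case by (auto simp: sat_decomposes_def)
  qed
qed

corollary fc_lang_append_finite_rank:
  assumes "finite (factor_closure P \<inter> factor_closure Q)"
  shows "finite_rank (\<lambda>i j. P i @ Q j \<in> fc_lang \<phi>)"
proof -
  obtain S where S: "finite_rank S" "sat_decomposes P Q \<phi> S"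
    using sat_decomposes_finite_rank[OF assms] by blast
  have "split_valuation (P i) (Q j) (\<lambda>_. []) (\<lambda>_. [])" for i j
    by (simp add: split_valuation_def boundary_splits_def)
  then have "sat (P i @ Q j) (\<lambda>x. (\<lambda>_. []) x @ (\<lambda>_. []) x) \<phi> \<longleftrightarrow> S (i, \<lambda>_. []) (j, \<lambda>_. [])"
    for i j
    using S(2) unfolding sat_decomposes_def by blast
  then have "P i @ Q j \<in> fc_lang \<phi> \<longleftrightarrow> S (i, \<lambda>_. []) (j, \<lambda>_. [])" for i j
    by (simp add: fc_lang_def)
  moreover have "finite_rank (\<lambda>i j. S (i, \<lambda>_. []) (j, \<lambda>_. []))"
    using S(1) by (rule finite_rank_compose)
  ultimately show ?thesis by simp
qed

lemma finite_factor_closure_co_primitive_powers: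
  fixes w1 w2 w3 u v :: "'a::finite list"
  assumes "co_primitive u v"
  shows "finite (factor_closure (\<lambda>a. w1 @ word_pow u a) \<inter> factor_closure (\<lambda>b. w2 @ word_pow v b @ w3))"
proof (rule finite_subset)
  let ?K = "length w1 + length w2 + length w3 + length u * length v + 1"
  show "factor_closure (\<lambda>a. w1 @ word_pow u a) \<inter> factor_closure (\<lambda>b. w2 @ word_pow v b @ w3)
      \<subseteq> {x. set x \<subseteq> UNIV \<and> length x \<le> ?K}"
  proof (intro subsetI CollectI conjI)
    fix x
    assume "x \<in> factor_closure (\<lambda>a. w1 @ word_pow u a) \<inter> factor_closure (\<lambda>b. w2 @ word_pow v b @ w3)"
    then have "length x \<le> 1 \<or> (\<exists>a b. sublist x (w1 @ word_pow u a) \<and> sublist x (w2 @ word_pow v b @ w3))"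
      unfolding factor_closure_def by blast
    then show "length x \<le> ?K"
      using co_primitive_common_sublist_bound[OF assms] by fastforce
  qed simp
  show "finite {x :: 'a list. set x \<subseteq> UNIV \<and> length x \<le> ?K}"
    by (rule finite_lists_length_le) simp
qed

theorem proposition4p13:
  fixes w1 w2 w3 u v :: "('a::finite) list" and f :: "nat \<Rightarrow> nat"
  assumes "co_primitive u v"
    and "inj f"
  shows "{w1 @ word_pow u p @ w2 @ word_pow v (f p) @ w3 | p. True} \<notin> FC_languages"
proof
  assume "{w1 @ word_pow u p @ w2 @ word_pow v (f p) @ w3 | p. True} \<in> FC_languages"
  then obtain \<phi> where L: "{w1 @ word_pow u p @ w2 @ word_pow v (f p) @ w3 | p. True} = fc_lang \<phi>"
    unfolding FC_languages_def by blast
  have member_iff: "(w1 @ word_pow u a) @ (w2 @ word_pow v b @ w3) \<in> fc_lang \<phi> \<longleftrightarrow> b = f a"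
    for a b
  proof
    assume "(w1 @ word_pow u a) @ (w2 @ word_pow v b @ w3) \<in> fc_lang \<phi>"
    then obtain p where
      "w1 @ word_pow u a @ w2 @ word_pow v b @ w3 = w1 @ word_pow u p @ w2 @ word_pow v (f p) @ w3"
      unfolding L[symmetric] by auto
    then show "b = f a" using co_primitive_pattern_inj[OF assms(1)] by blast
  qed (auto simp flip: L)
  have "finite_rank (\<lambda>a b. (w1 @ word_pow u a) @ (w2 @ word_pow v b @ w3) \<in> fc_lang \<phi>)"
    using fc_lang_append_finite_rank finite_factor_closure_co_primitive_powers[OF assms(1)] .
  then show False
    unfolding member_iff using inj_graph_not_finite_rank[OF assms(2) infinite_UNIV_nat] by blast
qed

end
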